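(* Each of the following systems has an isochronous center at the origin $O$ with zero Urabe function: (i) for every $a\in\mathbb R$: $\dot x=-y+axy+x^2-ax^3$, $\dot y=x+4ay^2-2xy-\frac32ax^2-6ax^2y+(2+a^2)x^3+\left(2a-\frac14a^3\right)x^4$; (ii) for every $a\in\mathbb R$: $\dot x=-y+axy+x^2-ax^3$, $\dot y=x+3ay^2-2xy-ax^2-4ax^2y+\left(\frac13a^2+2\right)x^3+ax^4$; (iii) for $\beta=\pm\sqrt3$: $\dot x=-y+2\beta xy+x^2-2\beta x^3$, $\dot y=x+8\beta y^2-2xy-3\beta x^2-12\beta x^2y+14x^3-2\beta x^4$; (iv) for $\alpha=\pm\sqrt2$: $\dot x=-y+\alpha xy+x^2-\frac43\alpha x^3+\frac23x^4$, $\dot y=x+6\alpha y^2-2xy-\frac52\alpha x^2-9\alpha x^2y+\frac{26}{3}x^3+6x^3y-\frac83\alpha x^4$; (v) for $\alpha=\pm\sqrt2$: $\dot x=-y+\alpha xy+x^2-\frac43\alpha x^3+\frac23x^4$, $\dot y=x+3\alpha y^2-2xy-\alpha x^2-3\alpha x^2y+\frac83x^3+2x^3y-\frac23\alpha x^4$.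
   Context: For a real planar polynomial system $\dot x=-y+A(x,y)$, $\dot y=x+B(x,y)$, with $A,B$ polynomials having no terms of degree $<2$, the origin $O$ is an isochronous center if there is a punctured neighborhood of $O$ in which every orbit is a closed orbit surrounding $O$ and all these orbits have the same period. Zero Urabe function: write the system as $\dot x=p_0(x)+p_1(x)y$, $\dot y=q_0(x)+q_1(x)y+q_2(x)y^2$ ($p_0(0)=q_0(0)=0$, $p_1(0)\ne0$), where it holds that $-\frac{p_1'p_0}{p_1}+q_1+p_0'-\frac{2q_2p_0}{p_1}\equiv0$. Put $f=-\frac{q_2+p_1'}{p_1}$, $g=-\frac{q_2p_0^2}{p_1}+q_1p_0-p_1q_0$ (the change $z=p_0+p_1y$ gives $\dot x=z$, $\dot z=-g(x)-f(x)z^2$), $F(x)=\int_0^xf$, and $\xi$ near $0$ by $\frac12\xi(x)^2=\int_0^xg(s)e^{2F(s)}ds$, $x\xi(x)>0$ for $x\ne0$. The Urabe function of an isochronous center is the odd analytic $h$ with $\frac{\xi(x)}{1+h(\xi(x))}=g(x)e^{F(x)}$; "zero Urabe function" means $h\equiv0$, i.e. $\xi(x)=g(x)e^{F(x)}$ near $0$. *)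

theory Defs
  imports "HOL-Analysis.Analysis"
begin

definition surrounds_origin :: "(real \<times> real) set \<Rightarrow> bool" where
  "surrounds_origin S \<longleftrightarrow> (0,0) \<notin> S \<and> bounded (connected_component_set (- S) (0,0))"

definition isochronous_center :: "(real \<times> real \<Rightarrow> real \<times> real) \<Rightarrow> bool" where
  "isochronous_center V \<longleftrightarrow>
    (\<exists>U T. open U \<and> (0,0) \<in> U \<and> T > 0 \<and>
      (\<forall>p \<in> U - {(0,0)}. \<exists>x :: real \<Rightarrow> real \<times> real.
          (\<forall>t. (x has_vector_derivative V (x t)) (at t)) \<and> x 0 = p \<and>
          (\<forall>t. x (t + T) = x t) \<and> (\<forall>s. 0 < s \<and> s < T \<longrightarrow> x s \<noteq> p) \<and>
          surrounds_origin (range x)))"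

definition sint :: "real \<Rightarrow> real \<Rightarrow> (real \<Rightarrow> real) \<Rightarrow> real" where
  "sint a b f = (if a \<le> b then integral {a..b} f else - integral {b..a} f)"

text \<open>Zero Urabe function: the system is written as
  x' = p0(x) + p1(x) y, y' = q0(x) + q1(x) y + q2(x) y^2 with p0(0) = q0(0) = 0, p1(0) \<noteq> 0
  and the reducibility identity; and near 0 the function xi defined by
  xi^2/2 = \<int>_0^x g e^{2F}, x xi(x) > 0, coincides with g e^F.\<close>
definition zero_urabe :: "(real \<times> real \<Rightarrow> real \<times> real) \<Rightarrow> bool" where
  "zero_urabe V \<longleftrightarrow>
    (\<exists>p0 p1 q0 q1 q2 :: real \<Rightarrow> real. \<exists>\<delta>>0.
       (\<forall>x y. V (x, y) = (p0 x + p1 x * y, q0 x + q1 x * y + q2 x * y ^ 2)) \<and>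
       p0 0 = 0 \<and> q0 0 = 0 \<and> p1 0 \<noteq> 0 \<and>
       (\<forall>x. \<bar>x\<bar> < \<delta> \<longrightarrow>
          - (deriv p1 x * p0 x / p1 x) + q1 x + deriv p0 x - 2 * q2 x * p0 x / p1 x = 0) \<and>
       (let f = (\<lambda>x. - (q2 x + deriv p1 x) / p1 x);
            g = (\<lambda>x. - (q2 x * p0 x ^ 2 / p1 x) + q1 x * p0 x - p1 x * q0 x);
            F = (\<lambda>x. sint 0 x f)
        in \<forall>x. \<bar>x\<bar> < \<delta> \<longrightarrow>
             (g x * exp (F x)) ^ 2 / 2 = sint 0 x (\<lambda>s. g s * exp (2 * F s)) \<and>
             (x \<noteq> 0 \<longrightarrow> x * (g x * exp (F x)) > 0)))"

definition iso_zero_urabe :: "(real \<times> real \<Rightarrow> real \<times> real) \<Rightarrow> bool" where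
  "iso_zero_urabe V \<longleftrightarrow> isochronous_center V \<and> zero_urabe V"

end

theory Submission
  imports Defs
begin

text \<open>
  For each system we exhibit the data of the definition of a zero Urabe function
  explicitly: \<open>p\<^sub>1(x) = c x - 1\<close> and \<open>q\<^sub>2 = n c\<close>, so \<open>e\<^sup>F = (1 - c x)\<^sup>-\<^sup>(\<^sup>n\<^sup>+\<^sup>1\<^sup>)\<close>, and
  \<open>\<xi>(x) = P(x) / (1 - c x)\<^sup>n\<close> for an explicit polynomial \<open>P\<close>; every condition then reduces to a
  polynomial identity. Zero Urabe function means \<open>\<xi>' = e\<^sup>F\<close> and \<open>\<xi> = g e\<^sup>F\<close>, and with these
  the chart \<open>(x, y) \<mapsto> (\<xi>(x), e\<^sup>F\<^sup>(\<^sup>x\<^sup>) (p\<^sub>0(x) + p\<^sub>1(x) y))\<close> conjugates the system near the origin to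
  the linear centre \<open>u' = v, v' = -u\<close>, whose orbits are circles of period \<open>2\<pi>\<close>; hence the
  origin is an isochronous centre.
\<close>

lemma sint_fundamental:
  fixes h h' :: "real \<Rightarrow> real"
  assumes deriv: "\<And>s. \<bar>s\<bar> < \<delta> \<Longrightarrow> (h has_real_derivative h' s) (at s)"
    and x: "\<bar>x\<bar> < \<delta>"
  shows "sint 0 x h' = h x - h 0"
proof (cases "0 \<le> x")
  case True
  have "(h' has_integral (h x - h 0)) {0..x}"
    by (rule fundamental_theorem_of_calculus[OF True])
       (use x in \<open>auto intro!: has_field_derivative_at_within deriv
                   simp flip: has_real_derivative_iff_has_vector_derivative\<close>)
  then show ?thesis using True by (simp add: sint_def integral_unique)
next
  case False
  have "(h' has_integral (h 0 - h x)) {x..0}"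
    by (rule fundamental_theorem_of_calculus)
       (use x False in \<open>auto intro!: has_field_derivative_at_within deriv
                         simp flip: has_real_derivative_iff_has_vector_derivative\<close>)
  then show ?thesis using False by (simp add: sint_def integral_unique)
qed

lemma polar:
  fixes z1 z2 \<rho> :: real
  assumes "\<rho> > 0" "norm (z1, z2) = \<rho>"
  obtains b where "z1 = \<rho> * cos b" "z2 = \<rho> * sin b"
proof -
  have "sqrt (z1\<^sup>2 + z2\<^sup>2) = \<rho>" using assms(2) by (simp add: norm_Pair)
  then have "z1\<^sup>2 + z2\<^sup>2 = \<rho>\<^sup>2" by (metis add_nonneg_nonneg real_sqrt_pow2 zero_le_power2)
  then have "(z1/\<rho>)\<^sup>2 + (z2/\<rho>)\<^sup>2 = 1" using assms(1) by (simp add: power_divide field_simps)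
  then obtain b where "z1/\<rho> = cos b" "z2/\<rho> = sin b" by (rule sincos_total_2pi)
  then show ?thesis using that assms(1) by (simp add: field_simps)
qed

text \<open>The flow of the linear centre \<open>u' = v, v' = -u\<close>: clockwise rotation by the angle \<open>t\<close>.\<close>
definition rotation :: "real \<Rightarrow> real \<times> real \<Rightarrow> real \<times> real" where
  "rotation t z = (cos t * fst z + sin t * snd z, cos t * snd z - sin t * fst z)"

lemma rotation_zero [simp]: "rotation 0 z = z"
  by (simp add: rotation_def)

lemma rotation_periodic: "rotation (t + 2 * pi) z = rotation t z"
  by (simp add: rotation_def)

lemma norm_rotation [simp]: "norm (rotation t z) = norm z"
proof -
  have "(cos t * a + sin t * b)\<^sup>2 + (cos t * b - sin t * a)\<^sup>2 = ((sin t)\<^sup>2 + (cos t)\<^sup>2) * (a\<^sup>2 + b\<^sup>2)"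
    for a b :: real by algebra
  then show ?thesis by (cases z) (simp add: rotation_def norm_Pair)
qed

lemma rotation_has_derivative:
  "((\<lambda>t. fst (rotation t z)) has_real_derivative snd (rotation t z)) (at t)"
  "((\<lambda>t. snd (rotation t z)) has_real_derivative - fst (rotation t z)) (at t)"
  by (auto simp: rotation_def algebra_simps intro!: derivative_eq_intros)

lemma rotation_no_return:
  assumes "z \<noteq> 0" "0 < s" "s < 2 * pi"
  shows "rotation s z \<noteq> z"
proof
  assume returns: "rotation s z = z"
  obtain a b where z: "z = (a, b)" by fastforce
  have "(cos s - 1) * a + sin s * b = 0" "(cos s - 1) * b - sin s * a = 0"
    using returns by (auto simp: rotation_def z algebra_simps)
  moreover have "(cos s - 1)\<^sup>2 + (sin s)\<^sup>2 = 2 * (1 - cos s)"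
    using sin_cos_squared_add[of s] by algebra
  ultimately have "(1 - cos s) * a = 0" "(1 - cos s) * b = 0"
    by algebra+
  then have "cos s = 1" using assms(1) z by (auto simp: zero_prod_def)
  then obtain n :: int where n: "s = of_int n * 2 * pi" by (auto simp: cos_one_2pi_int)
  then have "0 < real_of_int n" "real_of_int n < 1" using assms(2,3) by (simp_all add: zero_less_mult_iff)
  then have "0 < n" "n < 1" by simp_all
  then show False by linarith
qed

lemma range_rotation: "range (\<lambda>t. rotation t z) = sphere 0 (norm z)"
proof
  show "range (\<lambda>t. rotation t z) \<subseteq> sphere 0 (norm z)" by auto
next
  show "sphere 0 (norm z) \<subseteq> range (\<lambda>t. rotation t z)"
  proof
    fix w :: "real \<times> real" assume "w \<in> sphere 0 (norm z)"
    then have nw: "norm w = norm z" by simp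
    show "w \<in> range (\<lambda>t. rotation t z)"
    proof (cases "z = 0")
      case True
      then show ?thesis using nw by (auto simp: rotation_def zero_prod_def)
    next
      case False
      then have pos: "norm z > 0" by simp
      obtain a where a: "fst z = norm z * cos a" "snd z = norm z * sin a"
        using polar[OF pos, of "fst z" "snd z"] by auto
      obtain b where b: "fst w = norm z * cos b" "snd w = norm z * sin b"
        using polar[OF pos, of "fst w" "snd w"] nw by auto
      have "cos (a - b) * cos a + sin (a - b) * sin a = cos b"
        "cos (a - b) * sin a - sin (a - b) * cos a = sin b"
        using cos_diff[of "a - b" a] sin_diff[of a "a - b"] by (simp_all add: algebra_simps)
      then have "rotation (a - b) z = w"
        by (simp add: rotation_def a b prod_eq_iff)
           (metis mult.left_commute right_diff_distrib distrib_left)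
      then show ?thesis by (metis rangeI)
    qed
  qed
qed

text \<open>If \<open>\<Psi>\<close> maps the closed disc of radius \<open>\<rho>\<close> homeomorphically onto a neighbourhood of the
  origin (with continuous inverse \<open>\<Phi>\<close> on an open set \<open>W\<close>), then the image of the circle
  surrounds the origin: the component of the origin in its complement lies in the compact
  image of the disc.\<close>
lemma surrounds_origin_image_sphere:
  fixes \<Phi> \<Psi> :: "real \<times> real \<Rightarrow> real \<times> real" and W :: "(real \<times> real) set"
  assumes "\<rho> > 0" and "open W"
    and cont_\<Phi>: "continuous_on W \<Phi>" and cont_\<Psi>: "continuous_on (cball 0 \<rho>) \<Psi>"
    and \<Phi>_\<Psi>: "\<And>z. z \<in> cball 0 \<rho> \<Longrightarrow> \<Psi> z \<in> W \<and> \<Phi> (\<Psi> z) = z"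
    and \<Psi>_\<Phi>: "\<And>q. q \<in> W \<Longrightarrow> \<Psi> (\<Phi> q) = q"
    and \<Psi>_0: "\<Psi> 0 = 0"
  shows "surrounds_origin (\<Psi> ` sphere 0 \<rho>)"
proof -
  define A where "A = \<Psi> ` ball 0 \<rho>"
  define K where "K = \<Psi> ` cball 0 \<rho>"
  have "compact K" unfolding K_def by (rule compact_continuous_image[OF cont_\<Psi> compact_cball])
  have "A \<subseteq> K" unfolding A_def K_def by (rule image_mono[OF ball_subset_cball])
  have "A = W \<inter> \<Phi> -` ball 0 \<rho>"
  proof
    show "A \<subseteq> W \<inter> \<Phi> -` ball 0 \<rho>" using \<Phi>_\<Psi> by (auto simp: A_def)
    show "W \<inter> \<Phi> -` ball 0 \<rho> \<subseteq> A" using \<Psi>_\<Phi> unfolding A_def by (metis IntE image_eqI subsetI vimageE)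
  qed
  then have "open A" using continuous_open_preimage[OF cont_\<Phi> \<open>open W\<close> open_ball] by simp
  have "0 \<in> A" using \<Psi>_0 \<open>\<rho> > 0\<close> unfolding A_def by (metis centre_in_ball image_eqI)
  have origin_off: "0 \<notin> \<Psi> ` sphere 0 \<rho>"
  proof
    assume "0 \<in> \<Psi> ` sphere 0 \<rho>"
    then obtain z where z: "z \<in> sphere 0 \<rho>" "\<Psi> z = 0" by auto
    then have "z = \<Phi> (\<Psi> z)" using \<Phi>_\<Psi>[of z] by auto
    also have "\<dots> = \<Phi> (\<Psi> 0)" using z(2) \<Psi>_0 by simp
    also have "\<dots> = 0" using \<Phi>_\<Psi>[of 0] \<open>\<rho> > 0\<close> by simp
    finally show False using z \<open>\<rho> > 0\<close> by simp
  qed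
  have frontier: "frontier A \<subseteq> \<Psi> ` sphere 0 \<rho>"
  proof
    fix q assume "q \<in> frontier A"
    then have "q \<in> closure A" "q \<notin> A" using \<open>open A\<close> by (auto simp: frontier_def interior_open)
    then have "q \<in> K" using closure_minimal[OF \<open>A \<subseteq> K\<close> compact_imp_closed[OF \<open>compact K\<close>]] by auto
    then obtain z where "z \<in> cball 0 \<rho>" "q = \<Psi> z" by (auto simp: K_def)
    moreover have "z \<notin> ball 0 \<rho>" using \<open>q = \<Psi> z\<close> \<open>q \<notin> A\<close> by (auto simp: A_def)
    ultimately show "q \<in> \<Psi> ` sphere 0 \<rho>" by auto
  qed
  define C where "C = connected_component_set (- \<Psi> ` sphere 0 \<rho>) 0"
  have "C \<subseteq> A"
  proof (rule ccontr)
    assume "\<not> C \<subseteq> A"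
    then have "C - A \<noteq> {}" by blast
    moreover have "0 \<in> C \<inter> A" using origin_off \<open>0 \<in> A\<close> by (simp add: C_def)
    then have "C \<inter> A \<noteq> {}" by blast
    ultimately have "C \<inter> frontier A \<noteq> {}"
      by (intro connected_Int_frontier) (simp_all add: C_def)
    moreover have "C \<subseteq> - \<Psi> ` sphere 0 \<rho>" unfolding C_def by (rule connected_component_subset)
    ultimately show False using frontier by blast
  qed
  then have "bounded C" using bounded_subset[OF compact_imp_bounded[OF \<open>compact K\<close>]] \<open>A \<subseteq> K\<close> by blast
  then show ?thesis using origin_off by (simp add: surrounds_origin_def C_def zero_prod_def)
qed

lemma isochronous_center_conjugate_rotation:
  fixes V \<Phi> \<Psi> :: "real \<times> real \<Rightarrow> real \<times> real" and W :: "(real \<times> real) set"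
  assumes "open W" "0 \<in> W" "m > 0"
    and cont_\<Phi>: "continuous_on W \<Phi>" and cont_\<Psi>: "continuous_on (ball 0 m) \<Psi>"
    and \<Phi>_\<Psi>: "\<And>z. z \<in> ball 0 m \<Longrightarrow> \<Psi> z \<in> W \<and> \<Phi> (\<Psi> z) = z"
    and \<Psi>_\<Phi>: "\<And>q. q \<in> W \<Longrightarrow> \<Psi> (\<Phi> q) = q"
    and \<Phi>_0: "\<Phi> 0 = 0"
    and flow: "\<And>z t. z \<in> ball 0 m \<Longrightarrow>
      ((\<lambda>t. \<Psi> (rotation t z)) has_vector_derivative V (\<Psi> (rotation t z))) (at t)"
  shows "isochronous_center V"
proof -
  define U where "U = W \<inter> \<Phi> -` ball 0 m"
  have "open U" unfolding U_def by (rule continuous_open_preimage[OF cont_\<Phi> \<open>open W\<close> open_ball])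
  have "0 \<in> U" using assms(2,3) \<Phi>_0 by (simp add: U_def)
  have \<Psi>_0: "\<Psi> 0 = 0" using \<Psi>_\<Phi>[OF \<open>0 \<in> W\<close>] \<Phi>_0 by simp
  have periodic_orbit: "\<exists>x :: real \<Rightarrow> real \<times> real.
          (\<forall>t. (x has_vector_derivative V (x t)) (at t)) \<and> x 0 = p \<and>
          (\<forall>t. x (t + 2*pi) = x t) \<and> (\<forall>s. 0 < s \<and> s < 2*pi \<longrightarrow> x s \<noteq> p) \<and>
          surrounds_origin (range x)" if p: "p \<in> U" "p \<noteq> 0" for p
  proof (intro exI conjI allI impI)
    define z where "z = \<Phi> p"
    have "z \<in> ball 0 m" "p = \<Psi> z" using p \<Psi>_\<Phi> by (auto simp: U_def z_def)
    have "z \<noteq> 0" using \<open>p = \<Psi> z\<close> \<Psi>_0 p(2) by auto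
    let ?x = "\<lambda>t. \<Psi> (rotation t z)"
    have on_circle: "rotation t z \<in> ball 0 m" for t using \<open>z \<in> ball 0 m\<close> by simp
    show "(?x has_vector_derivative V (?x t)) (at t)" for t by (rule flow[OF \<open>z \<in> ball 0 m\<close>])
    show "?x 0 = p" using \<open>p = \<Psi> z\<close> by simp
    show "?x (t + 2 * pi) = ?x t" for t by (simp add: rotation_periodic)
    show "?x s \<noteq> p" if "0 < s \<and> s < 2 * pi" for s
    proof
      assume "?x s = p"
      then have "rotation s z = \<Phi> p" using \<Phi>_\<Psi>[OF on_circle] by metis
      then have "rotation s z = z" by (simp add: z_def)
      then show False using rotation_no_return[OF \<open>z \<noteq> 0\<close>] that by blast
    qed
    have "cball 0 (norm z) \<subseteq> ball 0 m" using \<open>z \<in> ball 0 m\<close> by auto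
    then have "surrounds_origin (\<Psi> ` sphere 0 (norm z))"
      using \<open>z \<noteq> 0\<close> \<Phi>_\<Psi> \<Psi>_\<Phi> \<Psi>_0
      by (intro surrounds_origin_image_sphere[OF _ \<open>open W\<close> cont_\<Phi> continuous_on_subset[OF cont_\<Psi>]]) auto
    moreover have "range ?x = \<Psi> ` sphere 0 (norm z)"
      using range_rotation[of z] by (metis image_image)
    ultimately show "surrounds_origin (range ?x)" by simp
  qed
  show ?thesis unfolding isochronous_center_def
    using \<open>open U\<close> \<open>0 \<in> U\<close> periodic_orbit
    by (intro exI[of _ U] exI[of _ "2 * pi"]) (auto simp: zero_prod_def)
qed

lemma strict_mono_pos_deriv:
  fixes f f' :: "real \<Rightarrow> real"
  assumes deriv: "\<And>x. \<bar>x\<bar> < \<delta> \<Longrightarrow> (f has_real_derivative f' x) (at x)"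
    and pos: "\<And>x. \<bar>x\<bar> < \<delta> \<Longrightarrow> f' x > 0"
    and "-\<delta> < a" "a < b" "b < \<delta>"
  shows "f a < f b"
proof (rule DERIV_pos_imp_increasing[OF \<open>a < b\<close>])
  fix x assume "a \<le> x" "x \<le> b"
  then have "\<bar>x\<bar> < \<delta>" using assms(3-5) by auto
  then show "\<exists>y. DERIV f x :> y \<and> y > 0" using deriv pos by blast
qed

lemma inverse_has_real_derivative:
  fixes f g f' :: "real \<Rightarrow> real"
  assumes f_g: "\<And>u. \<bar>u\<bar> < m \<Longrightarrow> \<bar>g u\<bar> < d \<and> f (g u) = u"
    and g_f: "\<And>x. \<bar>x\<bar> < d \<Longrightarrow> g (f x) = x"
    and deriv: "\<And>x. \<bar>x\<bar> < d \<Longrightarrow> (f has_real_derivative f' x) (at x)"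
    and "f' (g u) \<noteq> 0" and u: "\<bar>u\<bar> < m"
  shows "(g has_real_derivative 1 / f' (g u)) (at u)"
proof -
  let ?x = "g u"
  have x: "\<bar>?x\<bar> < d" "f ?x = u" using f_g[OF u] by auto
  define e where "e = (d - \<bar>?x\<bar>) / 2"
  have "e > 0" using x by (simp add: e_def)
  have near: "\<bar>z\<bar> < d" if "\<bar>z - ?x\<bar> \<le> e" for z
    using that x(1) abs_triangle_ineq[of "z - ?x" ?x] unfolding e_def by simp
  have "isCont g (f ?x)"
    by (rule isCont_inverse_function[OF \<open>e > 0\<close>])
       (auto intro: g_f near DERIV_isCont[OF deriv])
  then have "isCont g u" using x by simp
  have "DERIV g u :> inverse (f' ?x)"
    by (rule DERIV_inverse_function[where a="-m" and b=m])
       (use x u assms(4) f_g \<open>isCont g u\<close> in \<open>auto intro: deriv\<close>)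
  then show ?thesis by (simp add: inverse_eq_divide)
qed

lemma local_inverse_pos_deriv:
  fixes f f' :: "real \<Rightarrow> real"
  assumes "\<delta> > 0"
    and deriv: "\<And>x. \<bar>x\<bar> < \<delta> \<Longrightarrow> (f has_real_derivative f' x) (at x)"
    and pos: "\<And>x. \<bar>x\<bar> < \<delta> \<Longrightarrow> f' x > 0"
    and "f 0 = 0"
  obtains d m g where "0 < d" "d < \<delta>" "0 < m"
    "\<And>u. \<bar>u\<bar> < m \<Longrightarrow> \<bar>g u\<bar> < d \<and> f (g u) = u"
    "\<And>x. \<bar>x\<bar> < d \<Longrightarrow> g (f x) = x"
    "\<And>u. \<bar>u\<bar> < m \<Longrightarrow> (g has_real_derivative 1 / f' (g u)) (at u)"
proof -
  define d where "d = \<delta> / 2"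
  have d: "0 < d" "d < \<delta>" using \<open>\<delta> > 0\<close> by (auto simp: d_def)
  note mono = strict_mono_pos_deriv[of \<delta> f f', OF deriv pos]
  have inj: "x = y" if "\<bar>x\<bar> < \<delta>" "\<bar>y\<bar> < \<delta>" "f x = f y" for x y
    using mono[of x y] mono[of y x] that by (cases x y rule: linorder_cases) (auto simp: abs_less_iff)
  define m where "m = min (f d) (- f (-d))"
  have "0 < m" using mono[of 0 d] mono[of "-d" 0] d \<open>f 0 = 0\<close> by (simp add: m_def)
  have ex: "\<exists>x. \<bar>x\<bar> < d \<and> f x = u" if u: "\<bar>u\<bar> < m" for u
  proof -
    have "f (-d) \<le> u" "u \<le> f d" using u by (auto simp: m_def)
    then obtain x where x: "-d \<le> x" "x \<le> d" "f x = u"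
      using IVT[of f "-d" u d] d deriv DERIV_isCont by force
    moreover have "x \<noteq> d" "x \<noteq> -d" using x u by (auto simp: m_def)
    ultimately show ?thesis by (intro exI[of _ x]) auto
  qed
  define g where "g u = (SOME x. \<bar>x\<bar> < d \<and> f x = u)" for u
  have f_g: "\<bar>g u\<bar> < d \<and> f (g u) = u" if "\<bar>u\<bar> < m" for u
    unfolding g_def by (rule someI_ex[OF ex[OF that]])
  have g_f: "g (f x) = x" if x: "\<bar>x\<bar> < d" for x
  proof -
    have "\<bar>g (f x)\<bar> < d \<and> f (g (f x)) = f x"
      unfolding g_def by (rule someI[of _ x]) (use x in simp)
    then show ?thesis using inj x d by force
  qed
  have "(g has_real_derivative 1 / f' (g u)) (at u)" if "\<bar>u\<bar> < m" for u
    using f_g[OF that] d pos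
    by (intro inverse_has_real_derivative[OF f_g g_f _ _ that])
       (auto intro: deriv simp: less_imp_neq[symmetric])
  with that d \<open>0 < m\<close> f_g g_f show ?thesis by blast
qed

text \<open>The substitution \<open>z = p\<^sub>0(x) + p\<^sub>1(x) y\<close> turns \<open>y' = q\<^sub>0 + q\<^sub>1 y + q\<^sub>2 y\<^sup>2\<close> into the Lienard-type
  equation \<open>z' = -g(x) - f(x) z\<^sup>2\<close> (with \<open>x' = z\<close>) when the reducibility identity holds.
  Pointwise form: if \<open>z\<close> moves with speed \<open>-g - f z\<^sup>2\<close>, then \<open>y = (z - p\<^sub>0)/p\<^sub>1\<close> moves with
  speed \<open>q\<^sub>0 + q\<^sub>1 y + q\<^sub>2 y\<^sup>2\<close>.\<close>
lemma lienard_substitution: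
  fixes p0 p1 p0' p1' q0 q1 q2 z :: real
  assumes "p1 \<noteq> 0"
    and reducible: "- (p1' * p0 / p1) + q1 + p0' - 2 * q2 * p0 / p1 = 0"
  shows "((- (- (q2 * p0 ^ 2 / p1) + q1 * p0 - p1 * q0) - (- (q2 + p1') / p1) * z ^ 2 - p0' * z) * p1
          - (z - p0) * (p1' * z)) / (p1 * p1)
       = q0 + q1 * ((z - p0) / p1) + q2 * ((z - p0) / p1) ^ 2"
proof -
  have q1: "q1 = p1' * p0 / p1 - p0' + 2 * q2 * p0 / p1" using reducible by (simp add: algebra_simps)
  show ?thesis unfolding q1 using \<open>p1 \<noteq> 0\<close> by (simp add: field_simps power2_eq_square)
qed

text \<open>Besides the coefficients of the system we are
  given \<open>E = e\<^sup>F\<close> (characterised by \<open>E' = f E\<close>, \<open>E(0) = 1\<close>) and \<open>\<xi>\<close> with \<open>\<xi>' = E\<close>,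
  \<open>\<xi>(0) = 0\<close> and \<open>\<xi> = g E\<close>; the last identity is the condition \<open>h \<equiv> 0\<close> in differentiated form.\<close>
locale urabe_linearization =
  fixes V :: "real \<times> real \<Rightarrow> real \<times> real"
    and p0 p1 q0 q1 q2 p0' p1' E \<xi> :: "real \<Rightarrow> real" and \<delta> :: real
  assumes delta_pos: "\<delta> > 0"
    and V_eq: "\<And>x y. V (x, y) = (p0 x + p1 x * y, q0 x + q1 x * y + q2 x * y ^ 2)"
    and p0_0: "p0 0 = 0" and q0_0: "q0 0 = 0"
    and p1_nonzero: "\<And>x. \<bar>x\<bar> < \<delta> \<Longrightarrow> p1 x \<noteq> 0"
    and p0_deriv: "\<And>x. \<bar>x\<bar> < \<delta> \<Longrightarrow> (p0 has_real_derivative p0' x) (at x)"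
    and p1_deriv: "\<And>x. \<bar>x\<bar> < \<delta> \<Longrightarrow> (p1 has_real_derivative p1' x) (at x)"
    and reducible: "\<And>x. \<bar>x\<bar> < \<delta> \<Longrightarrow>
      - (p1' x * p0 x / p1 x) + q1 x + p0' x - 2 * q2 x * p0 x / p1 x = 0"
    and E_pos: "\<And>x. \<bar>x\<bar> < \<delta> \<Longrightarrow> E x > 0" and E_0: "E 0 = 1"
    and E_deriv: "\<And>x. \<bar>x\<bar> < \<delta> \<Longrightarrow>
      (E has_real_derivative (- (q2 x + p1' x) / p1 x * E x)) (at x)"
    and xi_deriv: "\<And>x. \<bar>x\<bar> < \<delta> \<Longrightarrow> (\<xi> has_real_derivative E x) (at x)"
    and xi_0: "\<xi> 0 = 0"
    and xi_eq: "\<And>x. \<bar>x\<bar> < \<delta> \<Longrightarrow>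
      (- (q2 x * p0 x ^ 2 / p1 x) + q1 x * p0 x - p1 x * q0 x) * E x = \<xi> x"
begin

lemma exp_F_eq:
  assumes x: "\<bar>x\<bar> < \<delta>"
  shows "exp (sint 0 x (\<lambda>s. - (q2 s + deriv p1 s) / p1 s)) = E x"
proof -
  have log_deriv: "((\<lambda>x. ln (E x)) has_real_derivative - (q2 s + deriv p1 s) / p1 s) (at s)"
    if s: "\<bar>s\<bar> < \<delta>" for s
  proof -
    have "((\<lambda>x. ln (E x)) has_real_derivative 1 / E s * (- (q2 s + p1' s) / p1 s * E s)) (at s)"
      using DERIV_chain2[OF DERIV_ln_divide[OF E_pos[OF s]] E_deriv[OF s]] .
    then show ?thesis using E_pos[OF s] DERIV_imp_deriv[OF p1_deriv[OF s]] by simp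
  qed
  show ?thesis using sint_fundamental[OF log_deriv x] E_0 E_pos[OF x] by simp
qed

text \<open>The Urabe function vanishes: \<open>\<xi> = g e\<^sup>F\<close> solves \<open>\<xi>\<^sup>2/2 = \<integral>\<^sub>0\<^sup>x g e\<^sup>2\<^sup>F\<close> because
  \<open>(\<xi>\<^sup>2/2)' = \<xi> E = g e\<^sup>2\<^sup>F\<close>, and \<open>x \<xi>(x) > 0\<close> because \<open>\<xi>\<close> is increasing with \<open>\<xi>(0) = 0\<close>.\<close>
lemma zero_urabe: "zero_urabe V"
  unfolding zero_urabe_def Let_def
proof (rule exI[of _ p0], rule exI[of _ p1], rule exI[of _ q0], rule exI[of _ q1],
    rule exI[of _ q2], rule exI[of _ \<delta>], intro conjI allI impI)
  show "\<delta> > 0" "p0 0 = 0" "q0 0 = 0" by (fact delta_pos p0_0 q0_0)+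
  show "p1 0 \<noteq> 0" using p1_nonzero delta_pos by simp
  show "V (x, y) = (p0 x + p1 x * y, q0 x + q1 x * y + q2 x * y ^ 2)" for x y by (rule V_eq)
  fix x :: real assume x: "\<bar>x\<bar> < \<delta>"
  show "- (deriv p1 x * p0 x / p1 x) + q1 x + deriv p0 x - 2 * q2 x * p0 x / p1 x = 0"
    using reducible[OF x] DERIV_imp_deriv[OF p0_deriv[OF x]] DERIV_imp_deriv[OF p1_deriv[OF x]]
    by simp
  let ?g = "\<lambda>x. - (q2 x * p0 x ^ 2 / p1 x) + q1 x * p0 x - p1 x * q0 x"
  let ?F = "\<lambda>x. sint 0 x (\<lambda>s. - (q2 s + deriv p1 s) / p1 s)"
  have g_exp_F: "?g s * exp (?F s) = \<xi> s" if "\<bar>s\<bar> < \<delta>" for s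
    using xi_eq[OF that] exp_F_eq[OF that] by simp
  have "((\<lambda>x. \<xi> x ^ 2 / 2) has_real_derivative ?g s * exp (2 * ?F s)) (at s)" if s: "\<bar>s\<bar> < \<delta>" for s
  proof -
    have "?g s * exp (2 * ?F s) = (?g s * exp (?F s)) * exp (?F s)"
      by (simp add: mult_exp_exp flip: mult_2)
    also have "\<dots> = \<xi> s * E s" using g_exp_F[OF s] exp_F_eq[OF s] by simp
    finally show ?thesis by (auto intro!: derivative_eq_intros xi_deriv[OF s])
  qed
  from sint_fundamental[OF this x]
  show "(?g x * exp (?F x)) ^ 2 / 2 = sint 0 x (\<lambda>s. ?g s * exp (2 * ?F s))"
    using g_exp_F[OF x] xi_0 by simp
  assume "x \<noteq> 0"
  have "\<xi> 0 < \<xi> x" if "x > 0" using that x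
    by (intro strict_mono_pos_deriv[of \<delta> \<xi> E, OF xi_deriv E_pos]) auto
  moreover have "\<xi> x < \<xi> 0" if "x < 0" using that x
    by (intro strict_mono_pos_deriv[of \<delta> \<xi> E, OF xi_deriv E_pos]) auto
  ultimately show "x * (?g x * exp (?F x)) > 0"
    using \<open>x \<noteq> 0\<close> g_exp_F[OF x] xi_0 by (cases "x > 0") (auto simp: mult_neg_neg)
qed

end

text \<open>With a local inverse \<open>\<xi>\<^sup>-\<^sup>1\<close> of \<open>\<xi>\<close> at hand, the map
  \<open>(x, y) \<mapsto> (\<xi>(x), E(x) (p\<^sub>0(x) + p\<^sub>1(x) y))\<close> is a chart near the origin in which the system
  becomes the linear centre \<open>u' = v, v' = -u\<close>.\<close>
locale urabe_chart = urabe_linearization +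
  fixes \<xi>_inv :: "real \<Rightarrow> real" and d m :: real
  assumes d_pos: "0 < d" and d_less: "d < \<delta>" and m_pos: "0 < m"
    and xi_xi_inv: "\<And>u. \<bar>u\<bar> < m \<Longrightarrow> \<bar>\<xi>_inv u\<bar> < d \<and> \<xi> (\<xi>_inv u) = u"
    and xi_inv_xi: "\<And>x. \<bar>x\<bar> < d \<Longrightarrow> \<xi>_inv (\<xi> x) = x"
    and xi_inv_deriv: "\<And>u. \<bar>u\<bar> < m \<Longrightarrow> (\<xi>_inv has_real_derivative 1 / E (\<xi>_inv u)) (at u)"
begin

definition chart :: "real \<times> real \<Rightarrow> real \<times> real" where
  "chart q = (\<xi> (fst q), E (fst q) * (p0 (fst q) + p1 (fst q) * snd q))"

definition chart_inv :: "real \<times> real \<Rightarrow> real \<times> real" where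
  "chart_inv z = (let x = \<xi>_inv (fst z) in (x, (snd z / E x - p0 x) / p1 x))"

lemma xi_inv_range: "\<bar>u\<bar> < m \<Longrightarrow> \<bar>\<xi>_inv u\<bar> < \<delta>"
  using xi_xi_inv d_less by force

lemma chart_chart_inv:
  assumes "\<bar>fst z\<bar> < m"
  shows "\<bar>fst (chart_inv z)\<bar> < d" and "chart (chart_inv z) = z"
proof -
  show "\<bar>fst (chart_inv z)\<bar> < d" using xi_xi_inv[OF assms] by (simp add: chart_inv_def Let_def)
  have "E (\<xi>_inv (fst z)) > 0" "p1 (\<xi>_inv (fst z)) \<noteq> 0"
    using xi_inv_range[OF assms] E_pos p1_nonzero by auto
  then show "chart (chart_inv z) = z"
    using xi_xi_inv[OF assms] by (simp add: chart_def chart_inv_def Let_def field_simps prod_eq_iff)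
qed

lemma chart_inv_chart:
  assumes "\<bar>fst q\<bar> < d"
  shows "chart_inv (chart q) = q"
proof -
  have "\<bar>fst q\<bar> < \<delta>" using assms d_less by linarith
  then have "E (fst q) > 0" "p1 (fst q) \<noteq> 0" using E_pos p1_nonzero by auto
  then show ?thesis
    using xi_inv_xi[OF assms] by (simp add: chart_def chart_inv_def Let_def field_simps prod_eq_iff)
qed

lemma continuous_chart: "continuous_on {q. \<bar>fst q\<bar> < d} chart"
proof (rule continuous_at_imp_continuous_on, rule ballI)
  fix q :: "real \<times> real" assume "q \<in> {q. \<bar>fst q\<bar> < d}"
  then have x: "\<bar>fst q\<bar> < \<delta>" using d_less by simp
  have "isCont (\<lambda>q. h (fst q)) q" if "isCont h (fst q)" for h :: "real \<Rightarrow> real"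
    by (rule isCont_o2[where f = fst, OF _ that]) (simp add: continuous_fst)
  note comp = this[OF DERIV_isCont[OF xi_deriv[OF x]]] this[OF DERIV_isCont[OF E_deriv[OF x]]]
    this[OF DERIV_isCont[OF p0_deriv[OF x]]] this[OF DERIV_isCont[OF p1_deriv[OF x]]]
  show "isCont chart q" unfolding chart_def
    by (intro continuous_Pair continuous_mult continuous_add comp continuous_snd continuous_ident)
qed

lemma continuous_chart_inv: "continuous_on {z. \<bar>fst z\<bar> < m} chart_inv"
proof (rule continuous_at_imp_continuous_on, rule ballI)
  fix z :: "real \<times> real" assume "z \<in> {z. \<bar>fst z\<bar> < m}"
  then have u: "\<bar>fst z\<bar> < m" by simp
  let ?x = "\<xi>_inv (fst z)"
  have x: "\<bar>?x\<bar> < \<delta>" by (rule xi_inv_range[OF u])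
  have cont_x: "isCont (\<lambda>z. \<xi>_inv (fst z)) z"
    by (rule isCont_o2[where f = fst, OF _ DERIV_isCont[OF xi_inv_deriv[OF u]]]) (simp add: continuous_fst)
  have "isCont (\<lambda>z. h (\<xi>_inv (fst z))) z" if "isCont h ?x" for h :: "real \<Rightarrow> real"
    by (rule isCont_o2[OF cont_x that])
  note comp = this[OF DERIV_isCont[OF E_deriv[OF x]]]
    this[OF DERIV_isCont[OF p0_deriv[OF x]]] this[OF DERIV_isCont[OF p1_deriv[OF x]]]
  have "E ?x \<noteq> 0" "p1 ?x \<noteq> 0" using E_pos[OF x] p1_nonzero[OF x] by auto
  then show "isCont chart_inv z" unfolding chart_inv_def Let_def
    by (intro continuous_Pair cont_x isCont_divide continuous_diff comp continuous_snd continuous_ident)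
qed

text \<open>In the chart, \<open>z = v / E(x)\<close> is the velocity
  \<open>x'\<close>, and \<open>u = g E\<close> makes \<open>z\<close> obey \<open>z' = -g - f z\<^sup>2\<close>; Lemma lienard_substitution
  then gives the equation for \<open>y\<close>.\<close>
lemma chart_inv_solution:
  fixes u v :: "real \<Rightarrow> real"
  assumes du: "(u has_real_derivative v t) (at t)" and dv: "(v has_real_derivative - u t) (at t)"
    and um: "\<bar>u t\<bar> < m"
  shows "((\<lambda>t. chart_inv (u t, v t)) has_vector_derivative V (chart_inv (u t, v t))) (at t)"
proof -
  define x where "x = \<xi>_inv (u t)"
  define z where "z = v t / E x"
  define f where "f = - (q2 x + p1' x) / p1 x"
  define g where "g = - (q2 x * p0 x ^ 2 / p1 x) + q1 x * p0 x - p1 x * q0 x"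
  have x: "\<bar>x\<bar> < \<delta>" unfolding x_def by (rule xi_inv_range[OF um])
  have E_x: "E x > 0" using E_pos[OF x] .
  have u_eq: "u t = g * E x" using xi_eq[OF x] xi_xi_inv[OF um] by (simp add: g_def x_def)
  have dx: "((\<lambda>t. \<xi>_inv (u t)) has_real_derivative z) (at t)"
    using DERIV_chain2[OF xi_inv_deriv[OF um] du] by (simp add: z_def x_def)
  have comp: "((\<lambda>t. h (\<xi>_inv (u t))) has_real_derivative D * z) (at t)"
    if "(h has_real_derivative D) (at x)" for h D
    using DERIV_chain2[OF that[unfolded x_def] dx] .
  have "((\<lambda>t. v t / E (\<xi>_inv (u t))) has_real_derivative
      (- u t * E x - v t * (f * E x * z)) / (E x * E x)) (at t)"
    using DERIV_divide[OF dv comp[OF E_deriv[OF x]]] E_x by (simp add: f_def x_def)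
  moreover have "(- u t * E x - v t * (f * E x * z)) / (E x * E x) = - g - f * z ^ 2"
    using E_x by (simp add: u_eq z_def field_simps power2_eq_square)
  ultimately have dz: "((\<lambda>t. v t / E (\<xi>_inv (u t))) has_real_derivative - g - f * z ^ 2) (at t)"
    by simp
  have "((\<lambda>t. (v t / E (\<xi>_inv (u t)) - p0 (\<xi>_inv (u t))) / p1 (\<xi>_inv (u t))) has_real_derivative
      ((- g - f * z ^ 2 - p0' x * z) * p1 x - (z - p0 x) * (p1' x * z)) / (p1 x * p1 x)) (at t)"
    using DERIV_divide[OF DERIV_diff[OF dz comp[OF p0_deriv[OF x]]] comp[OF p1_deriv[OF x]]]
      p1_nonzero[OF x] by (simp add: z_def x_def)
  also have "((- g - f * z ^ 2 - p0' x * z) * p1 x - (z - p0 x) * (p1' x * z)) / (p1 x * p1 x)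
      = q0 x + q1 x * ((z - p0 x) / p1 x) + q2 x * ((z - p0 x) / p1 x) ^ 2"
    unfolding f_def g_def by (rule lienard_substitution[OF p1_nonzero[OF x] reducible[OF x]])
  finally have dy: "((\<lambda>t. snd (chart_inv (u t, v t))) has_real_derivative
      q0 x + q1 x * ((z - p0 x) / p1 x) + q2 x * ((z - p0 x) / p1 x) ^ 2) (at t)"
    by (simp add: chart_inv_def Let_def)
  have "z = p0 x + p1 x * ((z - p0 x) / p1 x)" using p1_nonzero[OF x] by simp
  then have "V (chart_inv (u t, v t)) =
      (z, q0 x + q1 x * ((z - p0 x) / p1 x) + q2 x * ((z - p0 x) / p1 x) ^ 2)"
    by (simp add: chart_inv_def Let_def V_eq z_def x_def)
  moreover have "((\<lambda>t. fst (chart_inv (u t, v t))) has_real_derivative z) (at t)"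
    using dx by (simp add: chart_inv_def Let_def)
  ultimately show ?thesis
    using has_vector_derivative_Pair[OF _ dy[unfolded has_real_derivative_iff_has_vector_derivative],
        of "\<lambda>t. fst (chart_inv (u t, v t))"]
    by (simp add: has_real_derivative_iff_has_vector_derivative)
qed

lemma isochronous_center: "isochronous_center V"
proof (rule isochronous_center_conjugate_rotation)
  let ?W = "{q :: real \<times> real. \<bar>fst q\<bar> < d}"
  have ball_m: "\<bar>fst z\<bar> < m" if "z \<in> ball 0 m" for z :: "real \<times> real"
    using that norm_fst_le[of "fst z" "snd z"] by (simp add: dist_norm)
  show "open ?W" by (intro open_Collect_less continuous_intros)
  show "0 \<in> ?W" using d_pos by simp
  show "continuous_on ?W chart" by (rule continuous_chart)
  show "continuous_on (ball 0 m) chart_inv"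
    by (rule continuous_on_subset[OF continuous_chart_inv]) (auto dest: ball_m)
  show "chart_inv z \<in> ?W \<and> chart (chart_inv z) = z" if "z \<in> ball 0 m" for z
    using chart_chart_inv[OF ball_m[OF that]] by simp
  show "chart_inv (chart q) = q" if "q \<in> ?W" for q using chart_inv_chart that by simp
  show "chart 0 = 0" using xi_0 p0_0 by (simp add: chart_def zero_prod_def)
  show "((\<lambda>t. chart_inv (rotation t z)) has_vector_derivative V (chart_inv (rotation t z))) (at t)"
    if "z \<in> ball 0 m" for z t
    using chart_inv_solution[OF rotation_has_derivative ball_m] that by simp
qed (fact m_pos)

end

context urabe_linearization
begin

text \<open>Since \<open>\<xi>' = E > 0\<close>, \<open>\<xi>\<close> has a local inverse, which provides the chart.\<close>
lemma isochronous_center: "isochronous_center V"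
proof -
  obtain d m \<xi>_inv where "0 < d" "d < \<delta>" "0 < m"
    "\<And>u. \<bar>u\<bar> < m \<Longrightarrow> \<bar>\<xi>_inv u\<bar> < d \<and> \<xi> (\<xi>_inv u) = u"
    "\<And>x. \<bar>x\<bar> < d \<Longrightarrow> \<xi>_inv (\<xi> x) = x"
    "\<And>u. \<bar>u\<bar> < m \<Longrightarrow> (\<xi>_inv has_real_derivative 1 / E (\<xi>_inv u)) (at u)"
    using local_inverse_pos_deriv[OF delta_pos xi_deriv E_pos xi_0] by metis
  then interpret urabe_chart V p0 p1 q0 q1 q2 p0' p1' E \<xi> \<delta> \<xi>_inv d m
    by unfold_locales
  show ?thesis by (rule isochronous_center)
qed

theorem iso_zero_urabe: "iso_zero_urabe V"
  unfolding iso_zero_urabe_def using isochronous_center zero_urabe by blast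

end

lemma has_real_derivative_div_linear_power:
  fixes P :: "real \<Rightarrow> real"
  assumes P: "(P has_real_derivative P') (at x)" and w: "1 - c * x \<noteq> 0"
  shows "((\<lambda>x. P x / (1 - c * x) ^ n) has_real_derivative
           (P' * (1 - c * x) + real n * c * P x) / (1 - c * x) ^ Suc n) (at x)"
proof -
  have "((\<lambda>x. (1 - c * x) ^ n) has_real_derivative real n * (1 - c * x) ^ (n - 1) * (- c)) (at x)"
    by (auto intro!: derivative_eq_intros)
  from DERIV_divide[OF P this]
  have "((\<lambda>x. P x / (1 - c * x) ^ n) has_real_derivative
      (P' * (1 - c * x) ^ n - P x * (real n * (1 - c * x) ^ (n - 1) * (- c))) / ((1 - c * x) ^ n * (1 - c * x) ^ n)) (at x)"
    using w by simp
  moreover have "(P' * w ^ n - P x * (real n * w ^ (n - 1) * (- c))) / (w ^ n * w ^ n)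
      = (P' * w + real n * c * P x) / w ^ Suc n" if "w \<noteq> 0" for w :: real
  proof (cases n)
    case (Suc k)
    have "P' * w ^ n - P x * (real n * w ^ (n - 1) * (- c)) = w ^ k * (P' * w + real n * c * P x)"
      by (simp add: Suc algebra_simps)
    then show ?thesis using that by (simp add: Suc)
  qed (use that in simp)
  ultimately show ?thesis using w by simp
qed

lemma has_real_derivative_inverse_linear_power:
  assumes "1 - c * x \<noteq> 0"
  shows "((\<lambda>x. 1 / (1 - c * x) ^ k) has_real_derivative
           real k * c / (1 - c * x) * (1 / (1 - c * x) ^ k)) (at x)"
proof -
  have "((\<lambda>x. 1 / (1 - c * x) ^ k) has_real_derivative
      (0 * (1 - c * x) + real k * c * 1) / (1 - c * x) ^ Suc k) (at x)"
    by (rule has_real_derivative_div_linear_power) (use assms in auto)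
  moreover have "(0 * w + real k * c * 1) / w ^ Suc k = real k * c / w * (1 / w ^ k)" for w :: real
    by simp
  ultimately show ?thesis by (simp only:)
qed

text \<open>The systems of the theorem all have \<open>p\<^sub>1 = c x - 1\<close> and constant \<open>q\<^sub>2 = n c\<close>. Then
  \<open>f = (n+1) c / (1 - c x)\<close>, so \<open>E = e\<^sup>F = (1 - c x)\<^sup>-\<^sup>(\<^sup>n\<^sup>+\<^sup>1\<^sup>)\<close>, and the Urabe function vanishes
  as soon as \<open>g = (1 - c x) P\<close> for a polynomial \<open>P\<close> with \<open>(P / (1 - c x)\<^sup>n)' = E\<close>; then
  \<open>\<xi> = P / (1 - c x)\<^sup>n\<close>.\<close>
lemma iso_zero_urabe_linear_p1:
  fixes V :: "real \<times> real \<Rightarrow> real \<times> real" and c qc :: real and n :: nat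
    and pa qa qb pa' P P' :: "real \<Rightarrow> real"
  assumes V: "\<And>x y. V (x, y) = (pa x + (c * x - 1) * y, qa x + qb x * y + qc * y ^ 2)"
    and "pa 0 = 0" and "qa 0 = 0" and "P 0 = 0"
    and pa_deriv: "\<And>x. (pa has_real_derivative pa' x) (at x)"
    and P_deriv: "\<And>x. (P has_real_derivative P' x) (at x)"
    and qc: "qc = real n * c"
    and reducible: "\<And>x. (qb x + pa' x) * (1 - c * x) + (c + 2 * qc) * pa x = 0"
    and P'_eq: "\<And>x. P' x * (1 - c * x) + real n * c * P x = 1"
    and P_eq: "\<And>x. qc * pa x ^ 2 + (1 - c * x) * qb x * pa x + (1 - c * x) ^ 2 * qa x
                    = (1 - c * x) ^ 2 * P x"
  shows "iso_zero_urabe V"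
proof -
  define \<delta> where "\<delta> = 1 / (1 + \<bar>c\<bar>)"
  have w_pos: "1 - c * x > 0" if "\<bar>x\<bar> < \<delta>" for x
  proof -
    have "\<bar>c * x\<bar> \<le> \<bar>c\<bar> * \<delta>" using that by (simp add: abs_mult mult_left_mono)
    also have "\<dots> < 1" by (simp add: \<delta>_def field_simps)
    finally show ?thesis by linarith
  qed
  interpret urabe_linearization V pa "\<lambda>x. c * x - 1" qa qb "\<lambda>x. qc" pa' "\<lambda>x. c"
    "\<lambda>x. 1 / (1 - c * x) ^ Suc n" "\<lambda>x. P x / (1 - c * x) ^ n" \<delta>
  proof
    show "\<delta> > 0" by (simp add: \<delta>_def add_pos_nonneg)
    fix x :: real assume x: "\<bar>x\<bar> < \<delta>"
    note w = w_pos[OF x]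
    show "c * x - 1 \<noteq> 0" using w by simp
    show "((\<lambda>x. c * x - 1) has_real_derivative c) (at x)" by (auto intro!: derivative_eq_intros)
    have "(c + 2 * qc) * pa x = (qb x + pa' x) * (c * x - 1)"
      using reducible[of x] by (simp add: algebra_simps)
    then have "c * pa x / (c * x - 1) + 2 * qc * pa x / (c * x - 1) = qb x + pa' x"
      using w by (simp add: add_divide_distrib[symmetric] distrib_right[symmetric])
    then show "- (c * pa x / (c * x - 1)) + qb x + pa' x - 2 * qc * pa x / (c * x - 1) = 0"
      by linarith
    show "1 / (1 - c * x) ^ Suc n > 0" using w by simp
    show "((\<lambda>x. 1 / (1 - c * x) ^ Suc n) has_real_derivative
        - (qc + c) / (c * x - 1) * (1 / (1 - c * x) ^ Suc n)) (at x)"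
    proof -
      have "real (Suc n) * c / (1 - c * x) = (qc + c) / (1 - c * x)" by (simp add: qc algebra_simps)
      also have "\<dots> = - (qc + c) / (c * x - 1)"
        by (metis minus_diff_eq divide_minus_right minus_divide_left)
      finally show ?thesis using has_real_derivative_inverse_linear_power[of c x "Suc n"] w by simp
    qed
    show "((\<lambda>x. P x / (1 - c * x) ^ n) has_real_derivative 1 / (1 - c * x) ^ Suc n) (at x)"
      using has_real_derivative_div_linear_power[OF P_deriv, of c x n] w by (simp add: P'_eq)
    have "- (qc * pa x ^ 2 / (c * x - 1)) + qb x * pa x - (c * x - 1) * qa x = (1 - c * x) * P x"
      using P_eq[of x] w by (simp add: field_simps power2_eq_square)
    then show "(- (qc * pa x ^ 2 / (c * x - 1)) + qb x * pa x - (c * x - 1) * qa x)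
        * (1 / (1 - c * x) ^ Suc n) = P x / (1 - c * x) ^ n"
      using w by simp
  qed (use assms in simp_all)
  show ?thesis by (rule iso_zero_urabe)
qed

lemma system_i:
  "iso_zero_urabe (\<lambda>(x, y).
      (- y + a*x*y + x^2 - a*x^3,
       x + 4*a*y^2 - 2*x*y - 3/2*a*x^2 - 6*a*x^2*y + (2 + a^2)*x^3 + (2*a - a^3/4)*x^4))"
  by (rule iso_zero_urabe_linear_p1[where c = a and n = 4
        and pa = "\<lambda>x. x^2 - a*x^3" and pa' = "\<lambda>x. 2*x - 3*a*x^2"
        and qa = "\<lambda>x. x - 3/2*a*x^2 + (2 + a^2)*x^3 + (2*a - a^3/4)*x^4"
        and qb = "\<lambda>x. - 2*x - 6*a*x^2"
        and P = "\<lambda>x. x - 3/2*a*x^2 + a^2*x^3 - a^3*x^4/4"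
        and P' = "\<lambda>x. 1 - 3*a*x + 3*a^2*x^2 - a^3*x^3"])
     (auto intro!: derivative_eq_intros simp: algebra_simps eval_nat_numeral)

lemma system_ii:
  "iso_zero_urabe (\<lambda>(x, y).
      (- y + a*x*y + x^2 - a*x^3,
       x + 3*a*y^2 - 2*x*y - a*x^2 - 4*a*x^2*y + (a^2/3 + 2)*x^3 + a*x^4))"
  by (rule iso_zero_urabe_linear_p1[where c = a and n = 3
        and pa = "\<lambda>x. x^2 - a*x^3" and pa' = "\<lambda>x. 2*x - 3*a*x^2"
        and qa = "\<lambda>x. x - a*x^2 + (a^2/3 + 2)*x^3 + a*x^4"
        and qb = "\<lambda>x. - 2*x - 4*a*x^2"
        and P = "\<lambda>x. x - a*x^2 + a^2*x^3/3"
        and P' = "\<lambda>x. 1 - 2*a*x + a^2*x^2"])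
     (auto intro!: derivative_eq_intros simp: algebra_simps eval_nat_numeral)

text \<open>For the irrational parameters we only use \<open>\<beta>\<^sup>2 = 3\<close> (resp. \<open>\<alpha>\<^sup>2 = 2\<close>), in the form of
  rewrite rules for \<open>\<beta> \<beta>\<close> inside normalised polynomials.\<close>
lemma square_rewrites:
  fixes b r :: real
  assumes "b ^ 2 = r"
  shows "b * b = r" and "b * (b * z) = r * z"
  using assms by (simp_all add: power2_eq_square mult.assoc[symmetric])

lemma system_iii:
  assumes "\<beta> ^ 2 = 3"
  shows "iso_zero_urabe (\<lambda>(x, y).
      (- y + 2*\<beta>*x*y + x^2 - 2*\<beta>*x^3,
       x + 8*\<beta>*y^2 - 2*x*y - 3*\<beta>*x^2 - 12*\<beta>*x^2*y + 14*x^3 - 2*\<beta>*x^4))"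
  by (rule iso_zero_urabe_linear_p1[where c = "2*\<beta>" and n = 4
        and pa = "\<lambda>x. x^2 - 2*\<beta>*x^3" and pa' = "\<lambda>x. 2*x - 6*\<beta>*x^2"
        and qa = "\<lambda>x. x - 3*\<beta>*x^2 + 14*x^3 - 2*\<beta>*x^4"
        and qb = "\<lambda>x. - 2*x - 12*\<beta>*x^2"
        and P = "\<lambda>x. x - 3*\<beta>*x^2 + 12*x^3 - 6*\<beta>*x^4"
        and P' = "\<lambda>x. 1 - 6*\<beta>*x + 36*x^2 - 24*\<beta>*x^3"])
     (auto intro!: derivative_eq_intros
           simp: field_simps algebra_simps eval_nat_numeral square_rewrites[OF assms])

lemma system_iv:
  assumes "\<alpha> ^ 2 = 2"
  shows "iso_zero_urabe (\<lambda>(x, y).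
      (- y + \<alpha>*x*y + x^2 - 4/3*\<alpha>*x^3 + 2/3*x^4,
       x + 6*\<alpha>*y^2 - 2*x*y - 5/2*\<alpha>*x^2 - 9*\<alpha>*x^2*y + 26/3*x^3 + 6*x^3*y - 8/3*\<alpha>*x^4))"
  by (rule iso_zero_urabe_linear_p1[where c = \<alpha> and n = 6
        and pa = "\<lambda>x. x^2 - 4/3*\<alpha>*x^3 + 2/3*x^4" and pa' = "\<lambda>x. 2*x - 4*\<alpha>*x^2 + 8/3*x^3"
        and qa = "\<lambda>x. x - 5/2*\<alpha>*x^2 + 26/3*x^3 - 8/3*\<alpha>*x^4"
        and qb = "\<lambda>x. - 2*x - 9*\<alpha>*x^2 + 6*x^3"
        and P = "\<lambda>x. x - 5/2*\<alpha>*x^2 + 20/3*x^3 - 5*\<alpha>*x^4 + 4*x^5 - 2/3*\<alpha>*x^6"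
        and P' = "\<lambda>x. 1 - 5*\<alpha>*x + 20*x^2 - 20*\<alpha>*x^3 + 20*x^4 - 4*\<alpha>*x^5"])
     (auto intro!: derivative_eq_intros
           simp: field_simps algebra_simps eval_nat_numeral square_rewrites[OF assms])

lemma system_v:
  assumes "\<alpha> ^ 2 = 2"
  shows "iso_zero_urabe (\<lambda>(x, y).
      (- y + \<alpha>*x*y + x^2 - 4/3*\<alpha>*x^3 + 2/3*x^4,
       x + 3*\<alpha>*y^2 - 2*x*y - \<alpha>*x^2 - 3*\<alpha>*x^2*y + 8/3*x^3 + 2*x^3*y - 2/3*\<alpha>*x^4))"
  by (rule iso_zero_urabe_linear_p1[where c = \<alpha> and n = 3
        and pa = "\<lambda>x. x^2 - 4/3*\<alpha>*x^3 + 2/3*x^4" and pa' = "\<lambda>x. 2*x - 4*\<alpha>*x^2 + 8/3*x^3"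
        and qa = "\<lambda>x. x - \<alpha>*x^2 + 8/3*x^3 - 2/3*\<alpha>*x^4"
        and qb = "\<lambda>x. - 2*x - 3*\<alpha>*x^2 + 2*x^3"
        and P = "\<lambda>x. x - \<alpha>*x^2 + 2/3*x^3"
        and P' = "\<lambda>x. 1 - 2*\<alpha>*x + 2*x^2"])
     (auto intro!: derivative_eq_intros
           simp: field_simps algebra_simps eval_nat_numeral square_rewrites[OF assms])

theorem theorem4p2:
  shows
  "(\<forall>a::real. iso_zero_urabe (\<lambda>(x, y).
      (- y + a*x*y + x^2 - a*x^3,
       x + 4*a*y^2 - 2*x*y - 3/2*a*x^2 - 6*a*x^2*y + (2 + a^2)*x^3 + (2*a - a^3/4)*x^4)))
 \<and> (\<forall>a::real. iso_zero_urabe (\<lambda>(x, y).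
      (- y + a*x*y + x^2 - a*x^3,
       x + 3*a*y^2 - 2*x*y - a*x^2 - 4*a*x^2*y + (a^2/3 + 2)*x^3 + a*x^4)))
 \<and> (\<forall>\<beta>::real. \<beta> = sqrt 3 \<or> \<beta> = - sqrt 3 \<longrightarrow> iso_zero_urabe (\<lambda>(x, y).
      (- y + 2*\<beta>*x*y + x^2 - 2*\<beta>*x^3,
       x + 8*\<beta>*y^2 - 2*x*y - 3*\<beta>*x^2 - 12*\<beta>*x^2*y + 14*x^3 - 2*\<beta>*x^4)))
 \<and> (\<forall>\<alpha>::real. \<alpha> = sqrt 2 \<or> \<alpha> = - sqrt 2 \<longrightarrow> iso_zero_urabe (\<lambda>(x, y).
      (- y + \<alpha>*x*y + x^2 - 4/3*\<alpha>*x^3 + 2/3*x^4,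
       x + 6*\<alpha>*y^2 - 2*x*y - 5/2*\<alpha>*x^2 - 9*\<alpha>*x^2*y + 26/3*x^3 + 6*x^3*y - 8/3*\<alpha>*x^4)))
 \<and> (\<forall>\<alpha>::real. \<alpha> = sqrt 2 \<or> \<alpha> = - sqrt 2 \<longrightarrow> iso_zero_urabe (\<lambda>(x, y).
      (- y + \<alpha>*x*y + x^2 - 4/3*\<alpha>*x^3 + 2/3*x^4,
       x + 3*\<alpha>*y^2 - 2*x*y - \<alpha>*x^2 - 3*\<alpha>*x^2*y + 8/3*x^3 + 2*x^3*y - 2/3*\<alpha>*x^4)))"
proof -
  have "\<beta> ^ 2 = 3" if "\<beta> = sqrt 3 \<or> \<beta> = - sqrt 3" for \<beta> :: real
    using that by auto
  moreover have "\<alpha> ^ 2 = 2" if "\<alpha> = sqrt 2 \<or> \<alpha> = - sqrt 2" for \<alpha> :: real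
    using that by auto
  ultimately show ?thesis
    using system_i system_ii system_iii system_iv system_v by blast
qed

end
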